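(* Let $n>1$ be an odd integer with prime decomposition $n=p_1^{n_1}\cdots p_m^{n_m}$, let $A$ be a finite abelian group, and let $G$ be a group containing $A$ as a normal subgroup with $G/A\cong\mathbb{Z}_n$. If $[e]_\varphi$ is a subgroup of $G$ for every $\varphi\in{\rm Aut}\,G$, then $G$ is nilpotent of nilpotency class at most $\max\{n_1,\dots,n_m\}+1$.
   Context: For an automorphism $\varphi$ of $G$, $[e]_\varphi=\{z^{-1}\varphi(z)\mid z\in G\}$. A group has nilpotency class at most $c$ if $\gamma_{c+1}(G)=\{e\}$, where $\gamma_1(G)=G$, $\gamma_{k+1}(G)=[\gamma_k(G),G]$. *)

theory Defs
  imports "HOL-Algebra.Algebra" "HOL-Computational_Algebra.Primes"
begin

definition commutator_subgroup :: "('a, 'b) monoid_scheme \<Rightarrow> 'a set \<Rightarrow> 'a set \<Rightarrow> 'a set" where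
  "commutator_subgroup G H K =
     generate G {inv\<^bsub>G\<^esub> x \<otimes>\<^bsub>G\<^esub> inv\<^bsub>G\<^esub> y \<otimes>\<^bsub>G\<^esub> x \<otimes>\<^bsub>G\<^esub> y | x y. x \<in> H \<and> y \<in> K}"

text \<open>Lower central series, shifted by one: lower_central G k is gamma_(k+1)(G).\<close>
primrec lower_central :: "('a, 'b) monoid_scheme \<Rightarrow> nat \<Rightarrow> 'a set" where
  "lower_central G 0 = carrier G"
| "lower_central G (Suc k) = commutator_subgroup G (lower_central G k) (carrier G)"

definition nilpotent_class_le :: "('a, 'b) monoid_scheme \<Rightarrow> nat \<Rightarrow> bool" where
  "nilpotent_class_le G c \<longleftrightarrow> lower_central G c = {\<one>\<^bsub>G\<^esub>}"

definition twisted_class :: "('a, 'b) monoid_scheme \<Rightarrow> ('a \<Rightarrow> 'a) \<Rightarrow> 'a set" where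
  "twisted_class G \<phi> = {inv\<^bsub>G\<^esub> z \<otimes>\<^bsub>G\<^esub> \<phi> z | z. z \<in> carrier G}"

end

theory Submission
  imports Defs "HOL-Combinatorics.Cycles"
begin

text \<open>
  Let \<open>g\<close> generate \<open>G\<close> modulo \<open>A\<close>, let \<open>\<tau>\<close> be conjugation by \<open>g\<close> and
  \<open>\<delta> x = x\<inverse> \<tau>(x) = [x, g]\<close>, an endomorphism of the abelian group \<open>A\<close>.
  For \<open>c \<in> A\<close>, the twisted class of the inner automorphism induced by \<open>c\<close> is
  \<open>{\<tau>\<^sup>i(c) c\<inverse>}\<close>, whose size is the length of the \<open>\<tau>\<close>-orbit of \<open>c\<close>, a divisor of \<open>n\<close>.
  If \<open>c\<close> has \<open>p\<close>-power order and this class is a subgroup, it is a \<open>p\<close>-group permuted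
  by \<open>\<tau>\<close> with \<open>p\<close>-power period, so \<open>\<tau>\<close> fixes some \<open>\<tau>\<^sup>i(c) c\<inverse> \<noteq> 1\<close>.  Then \<open>\<tau>\<^sup>i\<close> fixes
  \<open>\<delta>(c)\<close>, so \<open>\<delta>(c)\<close> has a strictly shorter orbit, and induction on the orbit length
  \<open>p\<^sup>a\<close> gives \<open>\<delta>\<^sup>a\<^sup>+\<^sup>1(c) = 1\<close>.  Splitting elements into prime-power parts, \<open>\<delta>\<^sup>M\<^sup>+\<^sup>1\<close>
  kills \<open>A\<close>, where \<open>M\<close> is the largest exponent in \<open>n\<close>.  Finally \<open>\<gamma>\<^sub>k\<^sub>+\<^sub>2(G)\<close> lies in
  the kernel of \<open>\<delta>\<^sup>M\<^sup>-\<^sup>k\<close>, so \<open>\<gamma>\<^sub>M\<^sub>+\<^sub>2(G) = 1\<close>.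
\<close>

section \<open>Fixed points of a function of prime-power period\<close>

lemma funpow_image_subset:
  assumes "f ` S \<subseteq> S" shows "(f ^^ i) ` S \<subseteq> S"
  using assms by (induction i) auto

lemma range_funpow_least_power:
  assumes "(f ^^ n) x = x" and "0 < n"
  shows "range (\<lambda>i. (f ^^ i) x) = (\<lambda>i. (f ^^ i) x) ` {..<least_power f x}"
proof (intro subset_antisym subsetI)
  fix y assume "y \<in> range (\<lambda>i. (f ^^ i) x)"
  then obtain i where "y = (f ^^ i) x" by blast
  then have "y = (f ^^ (i mod least_power f x)) x"
    using funpow_mod_eq least_powerI(1)[OF assms] by metis
  then show "y \<in> (\<lambda>i. (f ^^ i) x) ` {..<least_power f x}"
    using least_powerI(2)[OF assms] by auto
qed auto

lemma card_range_funpow: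
  assumes "(f ^^ n) x = x" and "0 < n"
  shows "card (range (\<lambda>i. (f ^^ i) x)) = least_power f x"
proof -
  let ?l = "least_power f x"
  have distinct: False if "i < j" "j < ?l" "(f ^^ i) x = (f ^^ j) x" for i j
  proof -
    have "(f ^^ (?l - j + i)) x = (f ^^ (?l - j)) ((f ^^ j) x)"
      using that(3) by (simp add: funpow_add)
    also have "\<dots> = (f ^^ (?l - j + j)) x"
      by (simp only: funpow_add comp_apply)
    also have "\<dots> = x"
      using that(2) least_powerI(1)[OF assms] by simp
    finally have "?l \<le> ?l - j + i"
      using that(2) by (intro least_power_le) simp_all
    then show False using that by linarith
  qed
  have "inj_on (\<lambda>i. (f ^^ i) x) {..<?l}"
  proof (rule inj_onI)
    fix i j assume "i \<in> {..<?l}" "j \<in> {..<?l}" "(f ^^ i) x = (f ^^ j) x"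
    then show "i = j"
      using distinct[of i j] distinct[of j i] by (cases i j rule: linorder_cases) auto
  qed
  then show ?thesis
    by (simp add: range_funpow_least_power[OF assms] card_image)
qed

lemma orbit_fixed_point_imp_fixed:
  assumes "(f ^^ n) x = x" and "0 < n" and "y \<in> range (\<lambda>i. (f ^^ i) x)" and "f y = y"
  shows "f x = x"
proof -
  have "y \<in> (\<lambda>i. (f ^^ i) x) ` {..<least_power f x}"
    using assms(3) range_funpow_least_power[OF assms(1,2)] by simp
  then obtain i where i: "i < least_power f x" "y = (f ^^ i) x" by blast
  then have "(f ^^ (least_power f x - i)) y = (f ^^ (least_power f x - i + i)) x"
    by (simp only: funpow_add comp_apply)
  also have "\<dots> = x"
    using i(1) least_powerI(1)[OF assms(1,2)] by simp
  moreover have "(f ^^ m) y = y" for m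
    using assms(4) by (induction m) auto
  ultimately show ?thesis
    using assms(4) by simp
qed

lemma orbit_complement_closed:
  assumes "f ` S \<subseteq> S" and "\<And>y. y \<in> S \<Longrightarrow> (f ^^ n) y = y" and "0 < n"
  shows "f ` (S - range (\<lambda>i. (f ^^ i) x)) \<subseteq> S - range (\<lambda>i. (f ^^ i) x)"
proof
  fix z assume "z \<in> f ` (S - range (\<lambda>i. (f ^^ i) x))"
  then obtain y where y: "y \<in> S" "y \<notin> range (\<lambda>i. (f ^^ i) x)" "z = f y" by blast
  have "y = (f ^^ (n - 1)) (f y)"
    using assms(2)[OF y(1)] assms(3)
    by (simp flip: funpow_Suc_right[THEN fun_cong, unfolded comp_apply])
  then have "f y \<notin> range (\<lambda>i. (f ^^ i) x)"
    using y(2) by (auto simp flip: funpow_add[THEN fun_cong, unfolded comp_apply])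
  then show "z \<in> S - range (\<lambda>i. (f ^^ i) x)"
    using y assms(1) by auto
qed

lemma card_fixed_points_mod_prime:
  assumes "Factorial_Ring.prime p" and "finite S" and "f ` S \<subseteq> S"
    and "\<And>x. x \<in> S \<Longrightarrow> (f ^^ (p ^ t)) x = x"
  shows "card {x \<in> S. f x = x} mod p = card S mod p"
  using assms(2-4)
proof (induction "card S" arbitrary: S rule: less_induct)
  case less
  show ?case
  proof (cases "\<forall>x\<in>S. f x = x")
    case True
    then have "{x \<in> S. f x = x} = S" by blast
    then show ?thesis by simp
  next
    case False
    then obtain x where x: "x \<in> S" "f x \<noteq> x" by blast
    define Orb where "Orb = range (\<lambda>i. (f ^^ i) x)"
    have x_periodic: "(f ^^ p ^ t) x = x" "0 < p ^ t"
      using less.prems(3)[OF x(1)] prime_gt_0_nat[OF assms(1)] by simp_all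
    have "Orb \<subseteq> S"
      unfolding Orb_def using funpow_image_subset[OF less.prems(2)] x(1) by blast
    obtain k where k: "least_power f x = p ^ k"
      using least_power_minimal[OF x_periodic(1)] divides_primepow_nat[OF assms(1)] by blast
    moreover have "k \<noteq> 0"
      using least_powerI(1)[OF x_periodic] x(2) unfolding k by (cases k) auto
    ultimately have "p dvd card Orb"
      unfolding Orb_def card_range_funpow[OF x_periodic] by simp
    have "card (S - Orb) < card S"
      using \<open>Orb \<subseteq> S\<close> less.prems(1) unfolding Orb_def by (intro psubset_card_mono) auto
    then have "card {x \<in> S - Orb. f x = x} mod p = card (S - Orb) mod p"
      using less.prems orbit_complement_closed[OF less.prems(2,3) x_periodic(2), of x]
      unfolding Orb_def by (intro less.hyps) auto
    moreover have "{x \<in> S. f x = x} = {x \<in> S - Orb. f x = x}"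
      using orbit_fixed_point_imp_fixed[OF x_periodic] x(2) unfolding Orb_def by blast
    moreover have "card S = card (S - Orb) + card Orb"
      using \<open>Orb \<subseteq> S\<close> less.prems(1) by (metis card_Diff_subset card_mono finite_subset le_add_diff_inverse2)
    ultimately show ?thesis
      using \<open>p dvd card Orb\<close> by auto
  qed
qed

lemma prime_power_if_unique_prime_divisor:
  fixes m p :: nat
  assumes "Factorial_Ring.prime p" and "0 < m"
    and "\<And>q. Factorial_Ring.prime q \<Longrightarrow> q dvd m \<Longrightarrow> q = p"
  shows "\<exists>k. m = p ^ k"
proof -
  obtain v where v: "m = p ^ multiplicity p m * v" "\<not> p dvd v"
    using multiplicity_decompose'[of m p] assms(1,2) not_prime_unit by blast
  have "v = 1"
  proof (rule ccontr)
    assume "v \<noteq> 1"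
    moreover have "v \<noteq> 0" using v(1) assms(2) by (metis mult_0_right less_irrefl)
    ultimately obtain q where "Factorial_Ring.prime q" "q dvd v"
      using prime_factor_nat by blast
    then show False
      using assms(3)[of q] v by (metis dvd_mult)
  qed
  then show ?thesis using v(1) by auto
qed

lemma prime_power_or_coprime_split:
  fixes N :: nat
  assumes "0 < N"
  obtains p k where "Factorial_Ring.prime p" "N = p ^ k"
  | u v where "N = u * v" "coprime u v" "1 < u" "1 < v"
proof (cases "N = 1")
  case True
  then show ?thesis using that(1)[of 2 0] two_is_prime_nat by simp
next
  case False
  then obtain p where p: "Factorial_Ring.prime p" "p dvd N"
    using prime_factor_nat by blast
  obtain v where v: "N = p ^ multiplicity p N * v" "\<not> p dvd v"
    using multiplicity_decompose'[of N p] assms p(1) not_prime_unit by blast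
  have "0 < multiplicity p N"
    using p assms by (simp add: prime_multiplicity_gt_zero_iff)
  then have "1 < p ^ multiplicity p N"
    using one_less_power prime_gt_1_nat[OF p(1)] by blast
  moreover have "coprime (p ^ multiplicity p N) v"
    using prime_imp_coprime[OF p(1) v(2)] by simp
  moreover have "v \<noteq> 0" using v(1) assms by (metis mult_0_right less_irrefl)
  ultimately show ?thesis
    using that v(1) p(1) by (cases "v = 1") auto
qed

lemma exponent_le_Max_multiplicity:
  fixes n p a :: nat
  assumes "0 < n" and "Factorial_Ring.prime p" and "p ^ a dvd n"
  shows "a \<le> Max {multiplicity q n | q. q \<in> prime_factors n}"
proof (cases "a = 0")
  case False
  then have "p dvd n"
    using assms(3) dvd_trans[of p "p ^ a" n] by simp
  then have "p \<in> prime_factors n"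
    using assms(1,2) by (simp add: in_prime_factors_iff)
  then have "multiplicity p n \<le> Max {multiplicity q n | q. q \<in> prime_factors n}"
    by (intro Max_ge) (auto simp: setcompr_eq_image)
  moreover have "a \<le> multiplicity p n"
    using assms by (intro multiplicity_geI) auto
  ultimately show ?thesis by linarith
qed simp

definition commutator :: "('a, 'b) monoid_scheme \<Rightarrow> 'a \<Rightarrow> 'a \<Rightarrow> 'a" where
  "commutator G x y = inv\<^bsub>G\<^esub> x \<otimes>\<^bsub>G\<^esub> inv\<^bsub>G\<^esub> y \<otimes>\<^bsub>G\<^esub> x \<otimes>\<^bsub>G\<^esub> y"

context group
begin

lemma mult_inv_cancel_left [simp]:
  "x \<in> carrier G \<Longrightarrow> y \<in> carrier G \<Longrightarrow> x \<otimes> (inv x \<otimes> y) = y"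
  by (simp add: m_assoc[symmetric])

lemma inv_mult_cancel_left [simp]:
  "x \<in> carrier G \<Longrightarrow> y \<in> carrier G \<Longrightarrow> inv x \<otimes> (x \<otimes> y) = y"
  by (simp add: m_assoc[symmetric])

lemma commutator_subgroup_subset:
  assumes "subgroup K G" and "\<And>x y. x \<in> H \<Longrightarrow> y \<in> L \<Longrightarrow> commutator G x y \<in> K"
  shows "commutator_subgroup G H L \<subseteq> K"
  unfolding commutator_subgroup_def
  using assms by (intro generate_subgroup_incl) (auto simp: commutator_def)

lemma commutator_mult_right_mem:
  assumes "K \<lhd> G" and "x \<in> carrier G" "y \<in> carrier G" "z \<in> carrier G"
    and "commutator G x y \<in> K" "commutator G x z \<in> K"
  shows "commutator G x (y \<otimes> z) \<in> K"
proof -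
  have "commutator G x (y \<otimes> z) = commutator G x z \<otimes> (inv z \<otimes> commutator G x y \<otimes> z)"
    unfolding commutator_def using assms(2-4) by (simp add: m_assoc inv_mult_group)
  then show ?thesis
    using assms by (simp add: normal.inv_op_closed1 normal_imp_subgroup subgroup.m_closed)
qed

lemma commutator_mult_left_mem:
  assumes "K \<lhd> G" and "x \<in> carrier G" "y \<in> carrier G" "z \<in> carrier G"
    and "commutator G x z \<in> K" "commutator G y z \<in> K"
  shows "commutator G (x \<otimes> y) z \<in> K"
proof -
  have "commutator G (x \<otimes> y) z = (inv y \<otimes> commutator G x z \<otimes> y) \<otimes> commutator G y z"
    unfolding commutator_def using assms(2-4) by (simp add: m_assoc inv_mult_group)
  then show ?thesis
    using assms by (simp add: normal.inv_op_closed1 normal_imp_subgroup subgroup.m_closed)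
qed

lemma inner_automorphism:
  assumes "c \<in> carrier G"
  shows "(\<lambda>z\<in>carrier G. c \<otimes> z \<otimes> inv c) \<in> auto G"
proof -
  have "(\<lambda>z\<in>carrier G. c \<otimes> z \<otimes> inv c) \<in> hom G G"
    using assms by (intro homI) (simp_all add: m_assoc)
  then show ?thesis
    using conjugation_is_bij[OF assms] unfolding auto_def Bij_def by simp
qed

lemma subgroup_nat_pow_closed:
  "subgroup H G \<Longrightarrow> x \<in> H \<Longrightarrow> x [^] (k::nat) \<in> H"
  by (induction k) (simp_all add: subgroup.one_closed subgroup.m_closed)

lemma pow_card_subgroup:
  assumes "subgroup H G" and "finite H" and "x \<in> H"
  shows "x [^] card H = \<one>"
proof -
  interpret H: group "G\<lparr>carrier := H\<rparr>"
    using subgroup.subgroup_is_group[OF assms(1) is_group] .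
  have "x [^]\<^bsub>G\<lparr>carrier := H\<rparr>\<^esub> order (G\<lparr>carrier := H\<rparr>) = \<one>"
    using H.pow_order_eq_1 assms(3) by simp
  then show ?thesis
    unfolding order_def by (simp add: nat_pow_def)
qed

lemma card_subgroup_prime_power:
  assumes "subgroup H G" and "finite H" and "Factorial_Ring.prime p"
    and "\<And>x. x \<in> H \<Longrightarrow> x [^] (p ^ e) = \<one>"
  shows "\<exists>k. card H = p ^ k"
proof (rule prime_power_if_unique_prime_divisor[OF assms(3)])
  show "0 < card H"
    using assms(1,2) subgroup.one_closed card_gt_0_iff by blast
next
  fix q assume q: "Factorial_Ring.prime q" "q dvd card H"
  then obtain m where "order (G\<lparr>carrier := H\<rparr>) = q ^ 1 * m"
    unfolding order_def by auto
  then have "\<exists>Q. subgroup Q (G\<lparr>carrier := H\<rparr>) \<and> card Q = q ^ 1"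
    using assms(2) by (intro sylow_thm[OF q(1) subgroup.subgroup_is_group[OF assms(1) is_group], of 1 m]) simp_all
  then obtain Q where "subgroup Q (G\<lparr>carrier := H\<rparr>)" and card_Q: "card Q = q"
    by auto
  then have Q: "subgroup Q G" "Q \<subseteq> H"
    using incl_subgroup[OF assms(1)] subgroup.subset by fastforce+
  have "finite Q" "1 < card Q"
    using card_Q prime_gt_1_nat[OF q(1)] card.infinite by fastforce+
  have "\<not> Q \<subseteq> {\<one>}"
  proof
    assume "Q \<subseteq> {\<one>}"
    then have "card Q \<le> 1" using card_mono[of "{\<one>}" Q] by simp
    with \<open>1 < card Q\<close> show False by simp
  qed
  then obtain x where x: "x \<in> Q" "x \<noteq> \<one>" by blast
  then have x_carrier: "x \<in> carrier G" using Q subgroup.subset by blast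
  have "ord x dvd q"
    using pow_card_subgroup[OF Q(1) \<open>finite Q\<close> x(1)] card_Q pow_eq_id[OF x_carrier] by simp
  then have "ord x = q"
    using q(1) ord_eq_1[OF x_carrier] x(2) unfolding prime_nat_iff by blast
  moreover have "ord x dvd p ^ e"
    using assms(4) x Q pow_eq_id[OF x_carrier] by blast
  ultimately show "q = p"
    using prime_dvd_power[OF q(1)] primes_dvd_imp_eq[OF q(1) assms(3)] by auto
qed

lemma mem_subgroup_if_coprime_powers:
  fixes u v :: nat
  assumes "subgroup H G" and "x \<in> carrier G" and "coprime u v" and "0 < u"
    and "x [^] u \<in> H" and "x [^] v \<in> H"
  shows "x \<in> H"
proof -
  obtain a b where "u * a = v * b + gcd u v"
    using bezout_nat[of u v] assms(4) by auto
  then have "u * a = Suc (v * b)" using assms(3) by simp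
  then have "(x [^] u) [^] a = (x [^] v) [^] b \<otimes> x"
    using assms(2) by (simp add: nat_pow_pow)
  then have "x = inv ((x [^] v) [^] b) \<otimes> (x [^] u) [^] a"
    using assms(2) by (simp add: m_assoc[symmetric])
  also have "\<dots> \<in> H"
    using assms(1,5,6) subgroup_nat_pow_closed[OF assms(1)]
    by (simp add: subgroup.m_closed subgroup.m_inv_closed)
  finally show ?thesis .
qed

lemma mem_subgroup_if_prime_power_parts:
  fixes N :: nat
  assumes "subgroup H G" and "x \<in> carrier G" and "x [^] N = \<one>" and "0 < N"
    and "\<And>(m::nat) (p::nat) k. Factorial_Ring.prime p \<Longrightarrow> (x [^] m) [^] (p ^ k) = \<one> \<Longrightarrow> x [^] m \<in> H"
  shows "x \<in> H"
  using assms(2-5)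
proof (induction N arbitrary: x rule: less_induct)
  case (less N)
  from \<open>0 < N\<close> show ?case
  proof (cases rule: prime_power_or_coprime_split)
    case (1 p k)
    then show ?thesis using less.prems(1,2) less.prems(4)[of p 1 k] by simp
  next
    case (2 u v)
    have "x [^] w \<in> H" if "N = w * w'" "1 < w" "1 < w'" for w w'
    proof (rule less.IH)
      show "w' < N" "0 < w'" using that by simp_all
      show "x [^] w \<in> carrier G" "(x [^] w) [^] w' = \<one>"
        using less.prems(1,2) that(1) by (simp_all add: nat_pow_pow)
      show "(x [^] w) [^] m \<in> H" if "Factorial_Ring.prime (p::nat)" "((x [^] w) [^] (m::nat)) [^] p ^ k = \<one>"
        for m p k
        using less.prems(1) less.prems(4)[of p "w * m" k] that by (simp add: nat_pow_pow)
    qed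
    then have powers: "x [^] u \<in> H" "x [^] v \<in> H"
      using 2 by (auto simp: mult.commute)
    show ?thesis
      using mem_subgroup_if_coprime_powers[OF assms(1) less.prems(1) 2(2)] 2(3) powers by simp
  qed
qed

end

lemma (in normal) rcos_nat_pow:
  assumes "g \<in> carrier G"
  shows "(H #> g) [^]\<^bsub>G Mod H\<^esub> (k::nat) = H #> (g [^] k)"
proof (induction k)
  case 0
  show ?case using subset by (simp add: coset_mult_one)
next
  case (Suc k)
  then show ?case using assms by (simp add: rcos_sum)
qed

lemma (in group) cyclic_quotient_generator:
  assumes "A \<lhd> G" and "1 < n" and "G Mod A \<cong> integer_mod_group n"
  obtains g where "g \<in> carrier G" and "g [^] n \<in> A"
    and "\<And>x. x \<in> carrier G \<Longrightarrow> \<exists>a\<in>A. \<exists>i::nat. x = a \<otimes> g [^] i"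
proof -
  let ?Z = "integer_mod_group n"
  obtain h where h: "h \<in> hom (G Mod A) ?Z" "bij_betw h (carrier (G Mod A)) (carrier ?Z)"
    using assms(3) unfolding is_iso_def iso_def by blast
  have subgroup_A: "subgroup A G" using assms(1) by (rule normal_imp_subgroup)
  have coset_eq: "A #> x = A #> y"
    if "x \<in> carrier G" "y \<in> carrier G" "h (A #> x) = h (A #> y)" for x y
    using that h(2) unfolding bij_betw_def inj_on_def carrier_FactGroup by blast
  have "1 \<in> carrier ?Z" using assms(2) by simp
  then obtain C where C: "C \<in> carrier (G Mod A)" "h C = 1"
    using h(2) unfolding bij_betw_def by (metis imageE)
  then obtain g where g: "g \<in> carrier G" "C = A #> g"
    unfolding carrier_FactGroup by blast
  have h_pow: "h (A #> g [^] k) = int k mod int n" for k :: nat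
  proof -
    have "h (A #> g [^] k) = h (C [^]\<^bsub>G Mod A\<^esub> k)"
      using normal.rcos_nat_pow[OF assms(1) g(1)] g(2) by simp
    also have "\<dots> = int k mod int n"
      using hom_nat_pow[OF h(1) C(1) normal.factorgroup_is_group[OF assms(1)]] C(2) by simp
    finally show ?thesis .
  qed
  have "h (A #> g [^] n) = h (A #> \<one>)"
    using h_pow[of n] h_pow[of 0] by simp
  then have "A #> g [^] n = A"
    using coset_eq[of "g [^] n" \<one>] g(1) subgroup_A by (simp add: coset_mult_one subgroup.subset)
  then have "g [^] n \<in> A"
    using rcos_self[OF _ subgroup_A, of "g [^] n"] g(1) by simp
  moreover have "\<exists>a\<in>A. \<exists>i::nat. x = a \<otimes> g [^] i" if x: "x \<in> carrier G" for x
  proof -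
    have "h (A #> x) \<in> {0..<int n}"
      using h(1) x assms(2) unfolding hom_def carrier_FactGroup by (auto simp: carrier_integer_mod_group)
    then obtain k :: nat where "h (A #> x) = int k" "int k < int n"
      by (metis atLeastLessThan_iff nonneg_int_cases)
    then have "h (A #> g [^] k) = h (A #> x)"
      using h_pow by simp
    then have "A #> g [^] k = A #> x"
      using coset_eq g(1) x by simp
    then have "x \<in> A #> g [^] k"
      using rcos_self[OF x subgroup_A] by simp
    then show ?thesis
      unfolding r_coset_def by blast
  qed
  ultimately show ?thesis using that g(1) by blast
qed

section \<open>Abelian-by-cyclic groups\<close>

locale abelian_by_cyclic = group G for G (structure) +
  fixes A :: "'a set" and g :: 'a and n :: nat
  assumes A_normal: "A \<lhd> G"
    and A_comm: "\<And>x y. x \<in> A \<Longrightarrow> y \<in> A \<Longrightarrow> x \<otimes> y = y \<otimes> x"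
    and A_finite: "finite A"
    and g_carrier [simp]: "g \<in> carrier G"
    and g_pow_n: "g [^] n \<in> A"
    and n_pos: "0 < n"
    and decompose: "\<And>x. x \<in> carrier G \<Longrightarrow> \<exists>a\<in>A. \<exists>i::nat. x = a \<otimes> g [^] i"
begin

lemma A_subgroup: "subgroup A G"
  using A_normal by (rule normal_imp_subgroup)

lemma A_carrier [simp]: "x \<in> A \<Longrightarrow> x \<in> carrier G"
  by (rule subgroup.mem_carrier[OF A_subgroup])

lemma A_mult [simp]: "x \<in> A \<Longrightarrow> y \<in> A \<Longrightarrow> x \<otimes> y \<in> A"
  by (rule subgroup.m_closed[OF A_subgroup])

lemma A_inv [simp]: "x \<in> A \<Longrightarrow> inv x \<in> A"
  by (rule subgroup.m_inv_closed[OF A_subgroup])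

definition \<tau> :: "'a \<Rightarrow> 'a" where
  "\<tau> x = inv g \<otimes> x \<otimes> g"

lemma funpow_\<tau>: "x \<in> carrier G \<Longrightarrow> (\<tau> ^^ i) x = inv (g [^] i) \<otimes> x \<otimes> g [^] i"
  by (induction i) (simp_all add: \<tau>_def m_assoc inv_mult_group)

lemma funpow_\<tau>_A [simp]: "x \<in> A \<Longrightarrow> (\<tau> ^^ i) x \<in> A"
  by (simp add: funpow_\<tau> normal.inv_op_closed1[OF A_normal])

lemma funpow_\<tau>_one [simp]: "(\<tau> ^^ i) \<one> = \<one>"
  by (simp add: funpow_\<tau>)

lemma \<tau>_closed [simp]: "x \<in> carrier G \<Longrightarrow> \<tau> x \<in> carrier G"
  by (simp add: \<tau>_def)

lemma \<tau>_A [simp]: "x \<in> A \<Longrightarrow> \<tau> x \<in> A"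
  using funpow_\<tau>_A[of x 1] by simp

lemma funpow_\<tau>_mult:
  "x \<in> carrier G \<Longrightarrow> y \<in> carrier G \<Longrightarrow> (\<tau> ^^ i) (x \<otimes> y) = (\<tau> ^^ i) x \<otimes> (\<tau> ^^ i) y"
  by (simp add: funpow_\<tau> m_assoc)

lemma funpow_\<tau>_inv: "x \<in> carrier G \<Longrightarrow> (\<tau> ^^ i) (inv x) = inv ((\<tau> ^^ i) x)"
  by (simp add: funpow_\<tau> m_assoc inv_mult_group)

lemma funpow_\<tau>_pow: "x \<in> carrier G \<Longrightarrow> (\<tau> ^^ i) (x [^] (k::nat)) = (\<tau> ^^ i) x [^] k"
proof (induction k)
  case 0
  show ?case by (simp add: funpow_\<tau>)
next
  case (Suc k)
  then show ?case by (simp add: funpow_\<tau>_mult)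
qed

lemma funpow_\<tau>_n: "x \<in> A \<Longrightarrow> (\<tau> ^^ n) x = x"
  using A_comm[OF _ g_pow_n, of x] by (simp add: funpow_\<tau> m_assoc)

lemma conj_eq_funpow_\<tau>:
  assumes "y \<in> carrier G" and "x \<in> A"
  shows "\<exists>i. inv y \<otimes> x \<otimes> y = (\<tau> ^^ i) x"
proof -
  obtain a i where a: "a \<in> A" "y = a \<otimes> g [^] (i::nat)"
    using decompose[OF assms(1)] by blast
  have "inv y \<otimes> x \<otimes> y = inv (g [^] i) \<otimes> (inv a \<otimes> (x \<otimes> a)) \<otimes> g [^] i"
    using a assms(2) by (simp add: m_assoc inv_mult_group)
  also have "\<dots> = (\<tau> ^^ i) x"
    using A_comm[OF assms(2) a(1)] a(1) assms(2) by (simp add: funpow_\<tau>)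
  finally show ?thesis by blast
qed

definition \<delta> :: "'a \<Rightarrow> 'a" where
  "\<delta> x = inv x \<otimes> \<tau> x"

lemma commutator_g: "x \<in> carrier G \<Longrightarrow> commutator G x g = \<delta> x"
  by (simp add: commutator_def \<delta>_def \<tau>_def m_assoc)

lemma \<delta>_eq_one_iff: "x \<in> carrier G \<Longrightarrow> \<delta> x = \<one> \<longleftrightarrow> \<tau> x = x"
  by (simp add: \<delta>_def inv_solve_left')

lemma \<delta>_A [simp]: "x \<in> A \<Longrightarrow> \<delta> x \<in> A"
  by (simp add: \<delta>_def)

lemma \<delta>_mult:
  assumes "x \<in> A" and "y \<in> A"
  shows "\<delta> (x \<otimes> y) = \<delta> x \<otimes> \<delta> y"
proof -
  have "\<delta> (x \<otimes> y) = inv x \<otimes> (inv y \<otimes> \<tau> x) \<otimes> \<tau> y"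
    using assms A_comm[of "inv y" "inv x"] funpow_\<tau>_mult[of x y 1]
    by (simp add: \<delta>_def m_assoc inv_mult_group)
  also have "\<dots> = \<delta> x \<otimes> \<delta> y"
    using assms A_comm[of "inv y" "\<tau> x"] by (simp add: \<delta>_def m_assoc)
  finally show ?thesis .
qed

lemma \<delta>_inv:
  assumes "x \<in> A"
  shows "\<delta> (inv x) = inv (\<delta> x)"
proof -
  have "\<delta> (inv x) \<otimes> \<delta> x = \<one>"
    using \<delta>_mult[of "inv x" x] assms by (simp add: \<delta>_def \<tau>_def)
  then show ?thesis
    using inv_equality assms by simp
qed

lemma \<delta>_one [simp]: "\<delta> \<one> = \<one>"
  by (simp add: \<delta>_def \<tau>_def)

lemma \<delta>_pow: "x \<in> A \<Longrightarrow> \<delta> (x [^] (k::nat)) = \<delta> x [^] k"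
  by (induction k) (simp_all add: \<delta>_mult subgroup_nat_pow_closed[OF A_subgroup])

lemma \<delta>_funpow_\<tau>: "x \<in> carrier G \<Longrightarrow> \<delta> ((\<tau> ^^ i) x) = (\<tau> ^^ i) (\<delta> x)"
  by (simp add: \<delta>_def funpow_\<tau>_mult funpow_\<tau>_inv funpow_swap1)

lemma funpow_\<delta>_A [simp]: "x \<in> A \<Longrightarrow> (\<delta> ^^ k) x \<in> A"
  by (induction k) simp_all

lemma funpow_\<delta>_one [simp]: "(\<delta> ^^ k) \<one> = \<one>"
  by (induction k) simp_all

lemma funpow_\<delta>_mult: "x \<in> A \<Longrightarrow> y \<in> A \<Longrightarrow> (\<delta> ^^ k) (x \<otimes> y) = (\<delta> ^^ k) x \<otimes> (\<delta> ^^ k) y"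
  by (induction k) (simp_all add: \<delta>_mult)

lemma funpow_\<delta>_inv: "x \<in> A \<Longrightarrow> (\<delta> ^^ k) (inv x) = inv ((\<delta> ^^ k) x)"
  by (induction k) (simp_all add: \<delta>_inv)

lemma funpow_\<delta>_funpow_\<tau>: "x \<in> A \<Longrightarrow> (\<delta> ^^ k) ((\<tau> ^^ i) x) = (\<tau> ^^ i) ((\<delta> ^^ k) x)"
  by (induction k) (simp_all add: \<delta>_funpow_\<tau>)

lemma funpow_\<delta>_eq_one_mono:
  assumes "(\<delta> ^^ k) x = \<one>" and "k \<le> l"
  shows "(\<delta> ^^ l) x = \<one>"
proof -
  have "(\<delta> ^^ l) x = (\<delta> ^^ (l - k)) ((\<delta> ^^ k) x)"
    using assms(2) by (simp flip: funpow_add[THEN fun_cong, unfolded comp_apply])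
  then show ?thesis using assms(1) by simp
qed

definition delta_kernel :: "nat \<Rightarrow> 'a set" where
  "delta_kernel k = {x \<in> A. (\<delta> ^^ k) x = \<one>}"

lemma delta_kernel_0: "delta_kernel 0 = {\<one>}"
  using subgroup.one_closed[OF A_subgroup] by (auto simp: delta_kernel_def)

lemma delta_kernel_Suc: "x \<in> delta_kernel (Suc k) \<Longrightarrow> \<delta> x \<in> delta_kernel k"
  by (simp add: delta_kernel_def funpow_swap1)

lemma delta_kernel_normal: "delta_kernel k \<lhd> G"
proof (rule normal_invI)
  show "subgroup (delta_kernel k) G"
    by (rule subgroupI)
      (auto simp: delta_kernel_def funpow_\<delta>_mult funpow_\<delta>_inv
        intro!: exI[of _ \<one>] subgroup.one_closed[OF A_subgroup])
next
  fix y x assume y: "y \<in> carrier G" and x: "x \<in> delta_kernel k"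
  then obtain i where "inv (inv y) \<otimes> x \<otimes> inv y = (\<tau> ^^ i) x"
    using conj_eq_funpow_\<tau>[of "inv y" x] unfolding delta_kernel_def by auto
  then show "y \<otimes> x \<otimes> inv y \<in> delta_kernel k"
    using x y unfolding delta_kernel_def by (simp add: funpow_\<delta>_funpow_\<tau>)
qed

definition period :: "'a \<Rightarrow> nat" where
  "period c = least_power \<tau> c"

lemma funpow_\<tau>_period: "c \<in> A \<Longrightarrow> (\<tau> ^^ period c) c = c"
  unfolding period_def using least_powerI(1)[OF funpow_\<tau>_n n_pos] .

lemma funpow_\<tau>_eq_iff_period_dvd:
  assumes "c \<in> A"
  shows "(\<tau> ^^ i) c = c \<longleftrightarrow> period c dvd i"
proof
  assume "(\<tau> ^^ i) c = c"
  then show "period c dvd i"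
    unfolding period_def by (rule least_power_minimal)
next
  assume "period c dvd i"
  then show "(\<tau> ^^ i) c = c"
    using funpow_mod_eq[where f = \<tau> and n = "period c" and x = c and m = i] funpow_\<tau>_period[OF assms]
    by simp
qed

lemma period_dvd_n: "c \<in> A \<Longrightarrow> period c dvd n"
  using funpow_\<tau>_eq_iff_period_dvd funpow_\<tau>_n by blast

definition twisted :: "'a \<Rightarrow> 'a set" where
  "twisted c = (\<lambda>x. x \<otimes> inv c) ` range (\<lambda>i. (\<tau> ^^ i) c)"

lemma twisted_class_inner:
  assumes "c \<in> A"
  shows "twisted_class G (\<lambda>z\<in>carrier G. c \<otimes> z \<otimes> inv c) = twisted c"
proof (intro subset_antisym subsetI)
  fix w assume "w \<in> twisted_class G (\<lambda>z\<in>carrier G. c \<otimes> z \<otimes> inv c)"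
  then obtain z where z: "z \<in> carrier G" "w = inv z \<otimes> (c \<otimes> z \<otimes> inv c)"
    unfolding twisted_class_def by auto
  moreover obtain i where "inv z \<otimes> c \<otimes> z = (\<tau> ^^ i) c"
    using conj_eq_funpow_\<tau>[OF z(1) assms] by blast
  moreover have "w = (inv z \<otimes> c \<otimes> z) \<otimes> inv c"
    using z assms by (simp add: m_assoc)
  ultimately have "w = (\<tau> ^^ i) c \<otimes> inv c"
    by simp
  then show "w \<in> twisted c"
    unfolding twisted_def by blast
next
  fix w assume "w \<in> twisted c"
  then obtain i where "w = (\<tau> ^^ i) c \<otimes> inv c"
    unfolding twisted_def by blast
  then have "w = inv (g [^] i) \<otimes> (\<lambda>z\<in>carrier G. c \<otimes> z \<otimes> inv c) (g [^] i)"
    using assms by (simp add: funpow_\<tau> m_assoc)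
  then show "w \<in> twisted_class G (\<lambda>z\<in>carrier G. c \<otimes> z \<otimes> inv c)"
    unfolding twisted_class_def using nat_pow_closed[OF g_carrier] by blast
qed

lemma twisted_subset_A: "c \<in> A \<Longrightarrow> twisted c \<subseteq> A"
  by (auto simp: twisted_def)

lemma finite_twisted: "c \<in> A \<Longrightarrow> finite (twisted c)"
  using twisted_subset_A A_finite finite_subset by blast

lemma one_in_twisted:
  assumes "c \<in> A"
  shows "\<one> \<in> twisted c"
proof -
  have "(\<tau> ^^ 0) c \<otimes> inv c \<in> twisted c"
    unfolding twisted_def by blast
  then show ?thesis using assms by simp
qed

lemma twisted_elem:
  assumes "c \<in> A" and "x \<in> twisted c"
  obtains i where "i < period c" and "x = (\<tau> ^^ i) c \<otimes> inv c"
  using assms range_funpow_least_power[OF funpow_\<tau>_n n_pos, of c]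
  unfolding twisted_def period_def by auto

lemma card_twisted:
  assumes "c \<in> A"
  shows "card (twisted c) = period c"
proof -
  have "inj_on (\<lambda>x. x \<otimes> inv c) (range (\<lambda>i. (\<tau> ^^ i) c))"
    using assms by (intro inj_on_subset[OF inj_on_multc]) auto
  then show ?thesis
    unfolding twisted_def period_def
    using card_range_funpow[OF funpow_\<tau>_n[OF assms] n_pos] by (simp add: card_image)
qed

lemma \<tau>_twisted:
  assumes "c \<in> A" and "subgroup (twisted c) G" and "x \<in> twisted c"
  shows "\<tau> x \<in> twisted c"
proof -
  obtain i where x: "x = (\<tau> ^^ i) c \<otimes> inv c"
    using assms(3) unfolding twisted_def by blast
  have "\<tau> x = ((\<tau> ^^ Suc i) c \<otimes> inv c) \<otimes> inv ((\<tau> ^^ 1) c \<otimes> inv c)"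
    using assms(1) funpow_\<tau>_mult[of _ _ 1] funpow_\<tau>_inv[of _ 1]
    by (simp add: x m_assoc inv_mult_group)
  also have "\<dots> \<in> twisted c"
  proof -
    have mem: "(\<tau> ^^ j) c \<otimes> inv c \<in> twisted c" for j
      unfolding twisted_def by blast
    show ?thesis
      using subgroup.m_closed[OF assms(2) mem subgroup.m_inv_closed[OF assms(2) mem]] .
  qed
  finally show ?thesis .
qed

lemma funpow_\<tau>_period_twisted:
  assumes "c \<in> A" and "x \<in> twisted c"
  shows "(\<tau> ^^ period c) x = x"
proof -
  obtain i where x: "x = (\<tau> ^^ i) c \<otimes> inv c"
    using assms(2) unfolding twisted_def by blast
  have "(\<tau> ^^ period c) ((\<tau> ^^ i) c) = (\<tau> ^^ i) ((\<tau> ^^ period c) c)"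
    by (metis add.commute comp_apply funpow_add)
  then show ?thesis
    using assms(1) funpow_\<tau>_period[OF assms(1)] by (simp add: x funpow_\<tau>_mult funpow_\<tau>_inv)
qed

lemma period_prime_power:
  assumes "c \<in> A" and "subgroup (twisted c) G" and "Factorial_Ring.prime p"
    and "c [^] (p ^ e) = \<one>"
  shows "\<exists>a. period c = p ^ a"
proof -
  have "x [^] (p ^ e) = \<one>" if x_twisted: "x \<in> twisted c" for x
  proof -
    obtain i where x: "x = (\<tau> ^^ i) c \<otimes> inv c"
      using x_twisted unfolding twisted_def by blast
    have "x [^] (p ^ e) = (\<tau> ^^ i) c [^] (p ^ e) \<otimes> inv c [^] (p ^ e)"
      unfolding x using assms(1) by (intro pow_mult_distrib A_comm) simp_all
    also have "\<dots> = \<one>"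
      using assms(1,4) by (simp add: funpow_\<tau>_pow[symmetric] nat_pow_inv)
    finally show ?thesis .
  qed
  then show ?thesis
    using card_subgroup_prime_power[OF assms(2) finite_twisted[OF assms(1)] assms(3)]
      card_twisted[OF assms(1)] by auto
qed

lemma twisted_fixed_point:
  assumes "c \<in> A" and "subgroup (twisted c) G" and "Factorial_Ring.prime p"
    and "period c = p ^ a" and "0 < a"
  shows "\<exists>x\<in>twisted c. x \<noteq> \<one> \<and> \<tau> x = x"
proof (rule ccontr)
  assume "\<not> ?thesis"
  then have "{x \<in> twisted c. \<tau> x = x} = {\<one>}"
    using one_in_twisted[OF assms(1)] by (auto simp: \<tau>_def)
  moreover have "card {x \<in> twisted c. \<tau> x = x} mod p = card (twisted c) mod p"
    using \<tau>_twisted[OF assms(1,2)] funpow_\<tau>_period_twisted[OF assms(1)] assms(4)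
    by (intro card_fixed_points_mod_prime[OF assms(3) finite_twisted[OF assms(1)], where t = a]) auto
  moreover have "p dvd card (twisted c)"
    using card_twisted[OF assms(1)] assms(4,5) by (simp add: dvd_power)
  ultimately have "p dvd 1"
    by (simp add: dvd_eq_mod_eq_0)
  then show False
    using assms(3) by simp
qed

lemma period_\<delta>_dvd: "c \<in> A \<Longrightarrow> period (\<delta> c) dvd period c"
  using funpow_\<tau>_eq_iff_period_dvd[of "\<delta> c" "period c"] funpow_\<tau>_period[of c]
  by (simp flip: \<delta>_funpow_\<tau>)

lemma period_\<delta>_less:
  assumes "c \<in> A" and "x \<in> twisted c" and "x \<noteq> \<one>" and "\<tau> x = x"
  shows "period (\<delta> c) < period c"
proof -
  obtain i where i: "i < period c" "x = (\<tau> ^^ i) c \<otimes> inv c"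
    using twisted_elem[OF assms(1,2)] .
  have "i \<noteq> 0"
  proof
    assume "i = 0"
    then show False using i(2) assms(1,3) by simp
  qed
  have "x \<in> carrier G"
    using twisted_subset_A[OF assms(1)] assms(2) by auto
  then have "\<delta> x = \<one>"
    using assms(4) \<delta>_eq_one_iff by simp
  moreover have "\<delta> x = (\<tau> ^^ i) (\<delta> c) \<otimes> inv (\<delta> c)"
    using assms(1) \<delta>_mult[of "(\<tau> ^^ i) c" "inv c"] by (simp add: i(2) \<delta>_inv \<delta>_funpow_\<tau>)
  ultimately have "(\<tau> ^^ i) (\<delta> c) = \<delta> c"
    using assms(1) by (simp add: inv_solve_right')
  then have "period (\<delta> c) dvd i"
    using funpow_\<tau>_eq_iff_period_dvd assms(1) by simp
  then have "period (\<delta> c) \<le> i"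
    using \<open>i \<noteq> 0\<close> by (simp add: dvd_imp_le)
  then show ?thesis
    using i(1) by simp
qed

lemma funpow_\<delta>_prime_power_period:
  assumes twisted_subgroup: "\<And>c. c \<in> A \<Longrightarrow> subgroup (twisted c) G"
    and p: "Factorial_Ring.prime p"
  shows "c \<in> A \<Longrightarrow> c [^] (p ^ e) = \<one> \<Longrightarrow> period c = p ^ a \<Longrightarrow> (\<delta> ^^ Suc a) c = \<one>"
proof (induction a arbitrary: c rule: less_induct)
  case (less a c)
  show ?case
  proof (cases "a = 0")
    case True
    then have "\<tau> c = c"
      using less.prems funpow_\<tau>_period[of c] by simp
    then show ?thesis
      using True less.prems(1) \<delta>_eq_one_iff by simp
  next
    case False
    then obtain x where x: "x \<in> twisted c" "x \<noteq> \<one>" "\<tau> x = x"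
      using twisted_fixed_point[OF less.prems(1) twisted_subgroup[OF less.prems(1)] p less.prems(3)]
      by blast
    then have "period (\<delta> c) < p ^ a"
      using period_\<delta>_less[OF less.prems(1) x] less.prems(3) by simp
    moreover obtain b where b: "period (\<delta> c) = p ^ b"
      using period_\<delta>_dvd[OF less.prems(1)] less.prems(3) divides_primepow_nat[OF p] by auto
    ultimately have "b < a"
      using prime_gt_1_nat[OF p] by simp
    moreover have "\<delta> c [^] (p ^ e) = \<one>"
      using less.prems(1,2) by (simp flip: \<delta>_pow)
    ultimately have "(\<delta> ^^ Suc b) (\<delta> c) = \<one>"
      using less.IH less.prems(1) b by simp
    then have "(\<delta> ^^ Suc (Suc b)) c = \<one>"
      by (simp only: funpow_Suc_right comp_apply)
    moreover have "Suc (Suc b) \<le> Suc a"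
      using \<open>b < a\<close> by simp
    ultimately show ?thesis
      using funpow_\<delta>_eq_one_mono by blast
  qed
qed

lemma A_subset_delta_kernel:
  assumes twisted_subgroup: "\<And>c. c \<in> A \<Longrightarrow> subgroup (twisted c) G"
    and exponent_bound: "\<And>p a. Factorial_Ring.prime p \<Longrightarrow> p ^ a dvd n \<Longrightarrow> a \<le> M"
  shows "A \<subseteq> delta_kernel (Suc M)"
proof
  fix c assume c: "c \<in> A"
  show "c \<in> delta_kernel (Suc M)"
  proof (rule mem_subgroup_if_prime_power_parts[OF normal_imp_subgroup[OF delta_kernel_normal]])
    show "c \<in> carrier G" "c [^] card A = \<one>" "0 < card A"
      using c pow_card_subgroup[OF A_subgroup A_finite] A_finite card_gt_0_iff by auto
  next
    fix m :: nat and p k :: nat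
    assume p: "Factorial_Ring.prime p" and pow: "(c [^] m) [^] (p ^ k) = \<one>"
    have cm: "c [^] m \<in> A"
      using c subgroup_nat_pow_closed[OF A_subgroup] by blast
    then obtain a where a: "period (c [^] m) = p ^ a"
      using period_prime_power twisted_subgroup p pow by blast
    then have "a \<le> M"
      using exponent_bound[OF p] period_dvd_n[OF cm] by simp
    moreover have "(\<delta> ^^ Suc a) (c [^] m) = \<one>"
      using funpow_\<delta>_prime_power_period[OF twisted_subgroup p cm pow a] .
    ultimately have "(\<delta> ^^ Suc M) (c [^] m) = \<one>"
      using funpow_\<delta>_eq_one_mono[of "Suc a" _ "Suc M"] by blast
    then show "c [^] m \<in> delta_kernel (Suc M)"
      unfolding delta_kernel_def using cm by blast
  qed
qed

lemma commutator_A_A: "a \<in> A \<Longrightarrow> b \<in> A \<Longrightarrow> commutator G a b = \<one>"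
  using A_comm[of a b] by (simp add: commutator_def m_assoc)

lemma commutator_g_A:
  assumes "b \<in> A"
  shows "commutator G g b = \<delta> (inv b)"
proof -
  have "commutator G g b = \<tau> (inv b) \<otimes> b"
    using assms by (simp add: commutator_def \<tau>_def m_assoc)
  also have "\<dots> = b \<otimes> \<tau> (inv b)"
    using assms by (simp add: A_comm)
  finally show ?thesis
    using assms by (simp add: \<delta>_def)
qed

lemma commutator_right_mem:
  assumes "K \<lhd> G" and "x \<in> carrier G" and "y \<in> carrier G"
    and "\<And>a. a \<in> A \<Longrightarrow> commutator G x a \<in> K" and "commutator G x g \<in> K"
  shows "commutator G x y \<in> K"
proof -
  obtain a i where a: "a \<in> A" "y = a \<otimes> g [^] (i::nat)"
    using decompose[OF assms(3)] by blast
  have "commutator G x (a \<otimes> g [^] j) \<in> K" for j :: nat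
  proof (induction j)
    case 0
    then show ?case using assms(4)[OF a(1)] a(1) by simp
  next
    case (Suc j)
    have "a \<otimes> g [^] Suc j = (a \<otimes> g [^] j) \<otimes> g"
      using a(1) by (simp add: m_assoc)
    then show ?case
      using commutator_mult_right_mem[OF assms(1,2) _ g_carrier Suc assms(5)] a(1) by simp
  qed
  then show ?thesis using a(2) by simp
qed

lemma commutator_left_mem:
  assumes "K \<lhd> G" and "x \<in> carrier G" and "y \<in> carrier G"
    and "\<And>a. a \<in> A \<Longrightarrow> commutator G a y \<in> K" and "commutator G g y \<in> K"
  shows "commutator G x y \<in> K"
proof -
  obtain a i where a: "a \<in> A" "x = a \<otimes> g [^] (i::nat)"
    using decompose[OF assms(2)] by blast
  have "commutator G (a \<otimes> g [^] j) y \<in> K" for j :: nat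
  proof (induction j)
    case 0
    then show ?case using assms(4)[OF a(1)] a(1) by simp
  next
    case (Suc j)
    have "a \<otimes> g [^] Suc j = (a \<otimes> g [^] j) \<otimes> g"
      using a(1) by (simp add: m_assoc)
    then show ?case
      using commutator_mult_left_mem[OF assms(1) _ g_carrier assms(3) Suc assms(5)] a(1) by simp
  qed
  then show ?thesis using a(2) by simp
qed

lemma commutator_delta_kernel_Suc:
  assumes "x \<in> delta_kernel (Suc k)" and "y \<in> carrier G"
  shows "commutator G x y \<in> delta_kernel k"
proof -
  have x: "x \<in> A"
    using assms(1) by (simp add: delta_kernel_def)
  show ?thesis
  proof (rule commutator_right_mem[OF delta_kernel_normal _ assms(2)])
    show "commutator G x b \<in> delta_kernel k" if "b \<in> A" for b
      using commutator_A_A[OF x that] subgroup.one_closed[OF normal_imp_subgroup[OF delta_kernel_normal]]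
      by simp
    show "commutator G x g \<in> delta_kernel k"
      using commutator_g delta_kernel_Suc[OF assms(1)] x by simp
  qed (use x in simp)
qed

lemma commutator_mem_delta_kernel:
  assumes "A \<subseteq> delta_kernel (Suc M)" and "x \<in> carrier G" and "y \<in> carrier G"
  shows "commutator G x y \<in> delta_kernel M"
proof (rule commutator_left_mem[OF delta_kernel_normal assms(2,3)])
  show "commutator G a y \<in> delta_kernel M" if "a \<in> A" for a
    using commutator_delta_kernel_Suc assms(1,3) that by blast
  show "commutator G g y \<in> delta_kernel M"
  proof (rule commutator_right_mem[OF delta_kernel_normal g_carrier assms(3)])
    show "commutator G g b \<in> delta_kernel M" if "b \<in> A" for b
    proof -
      have "inv b \<in> delta_kernel (Suc M)"
        using assms(1) that by auto
      then show ?thesis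
        using commutator_g_A[OF that] delta_kernel_Suc by simp
    qed
    have "commutator G g g = \<one>"
      by (simp add: commutator_def m_assoc)
    then show "commutator G g g \<in> delta_kernel M"
      using subgroup.one_closed[OF normal_imp_subgroup[OF delta_kernel_normal]] by simp
  qed
qed

lemma lower_central_subset_delta_kernel:
  assumes "A \<subseteq> delta_kernel (Suc M)"
  shows "k \<le> M \<Longrightarrow> lower_central G (Suc k) \<subseteq> delta_kernel (M - k)"
proof (induction k)
  case 0
  have "commutator_subgroup G (carrier G) (carrier G) \<subseteq> delta_kernel M"
    using commutator_mem_delta_kernel[OF assms]
    by (intro commutator_subgroup_subset[OF normal_imp_subgroup[OF delta_kernel_normal]])
  then show ?case by simp
next
  case (Suc k)
  then have "lower_central G (Suc k) \<subseteq> delta_kernel (Suc (M - Suc k))"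
    by (simp add: Suc_diff_Suc)
  then have "commutator_subgroup G (lower_central G (Suc k)) (carrier G) \<subseteq> delta_kernel (M - Suc k)"
    using commutator_delta_kernel_Suc
    by (intro commutator_subgroup_subset[OF normal_imp_subgroup[OF delta_kernel_normal]]) blast
  then show ?case by simp
qed

lemma lower_central_trivial:
  assumes "A \<subseteq> delta_kernel (Suc M)"
  shows "lower_central G (Suc M) = {\<one>}"
proof
  show "lower_central G (Suc M) \<subseteq> {\<one>}"
    using lower_central_subset_delta_kernel[OF assms, of M] delta_kernel_0 by simp
  show "{\<one>} \<subseteq> lower_central G (Suc M)"
    by (simp add: commutator_subgroup_def generate.one)
qed

end

theorem (in group) nilpotent_class_le_if_twisted_classes_subgroups:
  assumes "A \<lhd> G" and "finite A" and "comm_group (G\<lparr>carrier := A\<rparr>)"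
    and "1 < n" and "G Mod A \<cong> integer_mod_group n"
    and "\<forall>\<phi> \<in> auto G. subgroup (twisted_class G \<phi>) G"
  shows "nilpotent_class_le G (Max {multiplicity p n | p. p \<in> prime_factors n} + 1)"
proof -
  obtain g where g: "g \<in> carrier G" "g [^] n \<in> A"
    "\<And>x. x \<in> carrier G \<Longrightarrow> \<exists>a\<in>A. \<exists>i::nat. x = a \<otimes> g [^] i"
    using cyclic_quotient_generator[OF assms(1,4,5)] by blast
  interpret abelian_by_cyclic G A g n
    using assms(1-4) g comm_monoid.m_comm[OF comm_group.axioms(1)[OF assms(3)]]
    by (intro abelian_by_cyclic.intro abelian_by_cyclic_axioms.intro is_group) auto
  have "subgroup (twisted c) G" if "c \<in> A" for c
    using assms(6) inner_automorphism[of c] twisted_class_inner[OF that] that by auto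
  then have "A \<subseteq> delta_kernel (Suc (Max {multiplicity p n | p. p \<in> prime_factors n}))"
    using exponent_le_Max_multiplicity n_pos by (intro A_subset_delta_kernel) auto
  then show ?thesis
    unfolding nilpotent_class_le_def using lower_central_trivial by simp
qed

theorem mainTheorem13:
  fixes G :: "('a, 'b) monoid_scheme" and A :: "'a set" and n :: nat
  assumes "group G"
    and "n > 1" and "odd n"
    and "A \<lhd> G"
    and "finite A"
    and "comm_group (G\<lparr>carrier := A\<rparr>)"
    and "G Mod A \<cong> integer_mod_group n"
    and "\<forall>\<phi> \<in> auto G. subgroup (twisted_class G \<phi>) G"
  shows "nilpotent_class_le G (Max {multiplicity p n | p. p \<in> prime_factors n} + 1)"
  using group.nilpotent_class_le_if_twisted_classes_subgroups[OF assms(1,4,5,6,2,7,8)] .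

end
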